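(* Let $\mathbb{X}$ and $\mathbb{Y}$ be absolutely matrix ordered spaces and $\varphi:\mathbb{X}\to \mathbb{Y}$ a completely absolute value preserving map. Put $Ker(\varphi)=\lbrace x\in \mathbb{X}:\varphi(x)=0\rbrace.$ Then: (1) $\mathbb{M}_{l,m}(Ker(\varphi))=Ker(\varphi_{l,m})$ for every $l,m\in \mathbb{N}.$ (2) $Ker(\varphi_l)$ is self-adjoint for every $l\in \mathbb{N}.$ (3) $Ker(\varphi)$ is an absolute matrix order ideal of $\mathbb{X}.$ (4) $\varphi=0$ if and only if $Ker(\varphi)=\mathbb{X}$ if and only if $Ker(\varphi)^+=\mathbb{X}^+.$ Moreover, if $\mathbb{X}$ is an absolute matrix order unit space with order unit $e$, then (5) $\varphi=0$ if and only if $\varphi(e)=0.$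
   Context: An absolutely matrix ordered space is a matrix ordered space $(\mathbb{X},\{\mathbb{M}_m(\mathbb{X})^+\})$ with maps $\vert\cdot\vert_{l,m}:\mathbb{M}_{l,m}(\mathbb{X})\to\mathbb{M}_m(\mathbb{X})^+$ such that each $(\mathbb{M}_m(\mathbb{X})_{sa},\mathbb{M}_m(\mathbb{X})^+,\vert\cdot\vert_m)$ is an absolutely ordered space, $\vert\varsigma_1x\varsigma_2\vert\le\Vert\varsigma_1\Vert\,\vert\vert x\vert\varsigma_2\vert$ for scalar matrices $\varsigma_1,\varsigma_2$, and $\vert x\circledast y\vert=\vert x\vert\circledast\vert y\vert$. $\varphi_{l,m}:\mathbb{M}_{l,m}(\mathbb{X})\to\mathbb{M}_{l,m}(\mathbb{Y})$ denotes the entrywise amplification $[x_{i,j}]\mapsto[\varphi(x_{i,j})]$, $\varphi_l=\varphi_{l,l}$; $\varphi$ is completely absolute value preserving if it is linear and $\varphi_l(\vert x\vert_l)=\vert\varphi_l(x)\vert_l$ for all $x\in\mathbb{M}_l(\mathbb{X})$ and all $l$ (this implies $\varphi_l(x^* )=\varphi_l(x)^*$). A subspace $\mathbb{Z}\subseteq\mathbb{X}$ is an absolute matrix order ideal if, with $\mathbb{M}_l(\mathbb{Z})^+=\mathbb{M}_l(\mathbb{X})^+\cap\mathbb{M}_l(\mathbb{Z})$, each $\mathbb{M}_l(\mathbb{Z})_{sa}$ is an order ideal of $\mathbb{M}_l(\mathbb{X})_{sa}$ and $\vert\cdot\vert_{l,m}$ maps $\mathbb{M}_{l,m}(\mathbb{Z})$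 into $\mathbb{M}_m(\mathbb{Z})^+$. $Ker(\varphi)^+=Ker(\varphi)\cap\mathbb{X}^+$. *)

theory Defs
  imports Complex_Main "Jordan_Normal_Form.Matrix"
begin

(* A complex vector space X is modelled by a type 'a :: ab_group_add together with
   a scalar multiplication sc :: complex => 'a => 'a satisfying the library
   axioms Vector_Spaces.vector_space.  Matrices over X are Jordan_Normal_Form
   matrices 'a mat; M_{l,m}(X) = carrier_mat l m. *)

definition rsm :: "(complex \<Rightarrow> 'a \<Rightarrow> 'a) \<Rightarrow> real \<Rightarrow> 'a mat \<Rightarrow> 'a mat" where
  "rsm sc k x = map_mat (sc (complex_of_real k)) x"

definition csm :: "(complex \<Rightarrow> 'a \<Rightarrow> 'a) \<Rightarrow> complex \<Rightarrow> 'a mat \<Rightarrow> 'a mat" where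
  "csm sc c x = map_mat (sc c) x"

definition mstar :: "('a \<Rightarrow> 'a) \<Rightarrow> 'a mat \<Rightarrow> 'a mat" where
  "mstar st x = mat (dim_col x) (dim_row x) (\<lambda>(i,j). st (x $$ (j,i)))"

definition cadj :: "complex mat \<Rightarrow> complex mat" where
  "cadj a = mat (dim_col a) (dim_row a) (\<lambda>(i,j). cnj (a $$ (j,i)))"

definition smL :: "(complex \<Rightarrow> 'a \<Rightarrow> 'a::ab_group_add) \<Rightarrow> complex mat \<Rightarrow> 'a mat \<Rightarrow> 'a mat" where
  "smL sc a x = mat (dim_row a) (dim_col x) (\<lambda>(i,j). \<Sum>k<dim_col a. sc (a $$ (i,k)) (x $$ (k,j)))"

definition smR :: "(complex \<Rightarrow> 'a \<Rightarrow> 'a::ab_group_add) \<Rightarrow> 'a mat \<Rightarrow> complex mat \<Rightarrow> 'a mat" where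
  "smR sc x a = mat (dim_row x) (dim_col a) (\<lambda>(i,j). \<Sum>k<dim_col x. sc (a $$ (k,j)) (x $$ (i,k)))"

definition dsum :: "'a::zero mat \<Rightarrow> 'a mat \<Rightarrow> 'a mat" where
  "dsum x y = four_block_mat x (0\<^sub>m (dim_row x) (dim_col y)) (0\<^sub>m (dim_row y) (dim_col x)) y"

definition cvnorm :: "complex vec \<Rightarrow> real" where
  "cvnorm v = sqrt (\<Sum>i<dim_vec v. (cmod (v $ i))\<^sup>2)"

definition opnorm :: "complex mat \<Rightarrow> real" where
  "opnorm a = Sup {cvnorm (a *\<^sub>v v) | v. v \<in> carrier_vec (dim_col a) \<and> cvnorm v \<le> 1}"

definition sa_mats :: "('a \<Rightarrow> 'a) \<Rightarrow> nat \<Rightarrow> 'a mat set" where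
  "sa_mats st n = {x \<in> carrier_mat n n. mstar st x = x}"

definition mats_of :: "'a set \<Rightarrow> nat \<Rightarrow> nat \<Rightarrow> 'a mat set" where
  "mats_of Z l m = {x \<in> carrier_mat l m. \<forall>i<l. \<forall>j<m. x $$ (i,j) \<in> Z}"

definition ordered_space :: "(complex \<Rightarrow> 'a \<Rightarrow> 'a::ab_group_add) \<Rightarrow> 'a mat set \<Rightarrow> 'a mat set \<Rightarrow> bool" where
  "ordered_space sc V C \<longleftrightarrow>
     C \<subseteq> V \<and> (\<forall>u\<in>C. \<forall>v\<in>C. u + v \<in> C) \<and> (\<forall>k\<ge>0. \<forall>v\<in>C. rsm sc k v \<in> C)
     \<and> (\<forall>v\<in>C. - v \<in> C \<longrightarrow> v = 0\<^sub>m (dim_row v) (dim_col v))"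

definition abs_ordered_space ::
  "(complex \<Rightarrow> 'a \<Rightarrow> 'a::ab_group_add) \<Rightarrow> 'a mat set \<Rightarrow> 'a mat set \<Rightarrow> ('a mat \<Rightarrow> 'a mat) \<Rightarrow> bool" where
  "abs_ordered_space sc V C f \<longleftrightarrow>
     ordered_space sc V C
     \<and> (\<forall>v\<in>V. f v \<in> C)
     \<and> (\<forall>v\<in>C. f v = v)
     \<and> (\<forall>v\<in>V. f v + v \<in> C \<and> f v - v \<in> C)
     \<and> (\<forall>v\<in>V. \<forall>k. f (rsm sc k v) = rsm sc \<bar>k\<bar> (f v))
     \<and> (\<forall>u\<in>V. \<forall>v\<in>V. \<forall>w\<in>V. f (u - v) = u + v \<and> w \<in> C \<and> v - w \<in> C
            \<longrightarrow> f (u - w) = u + w)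
     \<and> (\<forall>u\<in>V. \<forall>v\<in>V. \<forall>w\<in>V. f (u - v) = u + v \<and> f (u - w) = u + w
            \<longrightarrow> f (u - f (v + w)) = u + f (v + w) \<and> f (u - f (v - w)) = u + f (v - w))
     \<and> (\<forall>u\<in>V. \<forall>v\<in>V. \<forall>w\<in>V. f (u - v) = u + v \<and> w \<in> C \<and> u - w \<in> C
            \<longrightarrow> f (w - v) = w + v)"

definition matrix_ordered_space ::
  "(complex \<Rightarrow> 'a \<Rightarrow> 'a::ab_group_add) \<Rightarrow> ('a \<Rightarrow> 'a) \<Rightarrow> (nat \<Rightarrow> 'a mat set) \<Rightarrow> bool" where
  "matrix_ordered_space sc st P \<longleftrightarrow>
     Vector_Spaces.vector_space sc
     \<and> (\<forall>x y. st (x + y) = st x + st y)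
     \<and> (\<forall>c x. st (sc c x) = sc (cnj c) (st x))
     \<and> (\<forall>x. st (st x) = x)
     \<and> (\<forall>n>0. ordered_space sc (sa_mats st n) (P n))
     \<and> (\<forall>n m. 0 < n \<longrightarrow> 0 < m \<longrightarrow>
           (\<forall>a\<in>carrier_mat n m. \<forall>x\<in>P n. smR sc (smL sc (cadj a) x) a \<in> P m))"

text \<open>absolutely matrix ordered space; ab is the family of maps |.|_{l,m}\<close>
definition abs_matrix_ordered_space ::
  "(complex \<Rightarrow> 'a \<Rightarrow> 'a::ab_group_add) \<Rightarrow> ('a \<Rightarrow> 'a) \<Rightarrow> (nat \<Rightarrow> 'a mat set) \<Rightarrow> ('a mat \<Rightarrow> 'a mat) \<Rightarrow> bool" where
  "abs_matrix_ordered_space sc st P ab \<longleftrightarrow>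
     matrix_ordered_space sc st P
     \<and> (\<forall>l m. 0 < l \<longrightarrow> 0 < m \<longrightarrow> (\<forall>x\<in>carrier_mat l m. ab x \<in> P m))
     \<and> (\<forall>m>0. abs_ordered_space sc (sa_mats st m) (P m) ab)
     \<and> (\<forall>l m n r. 0 < l \<longrightarrow> 0 < m \<longrightarrow> 0 < n \<longrightarrow> 0 < r \<longrightarrow>
          (\<forall>x\<in>carrier_mat l m. \<forall>a1\<in>carrier_mat n l. \<forall>a2\<in>carrier_mat m r.
             rsm sc (opnorm a1) (ab (smR sc (ab x) a2)) - ab (smR sc (smL sc a1 x) a2) \<in> P r))
     \<and> (\<forall>l m n r. 0 < l \<longrightarrow> 0 < m \<longrightarrow> 0 < n \<longrightarrow> 0 < r \<longrightarrow>
          (\<forall>x\<in>carrier_mat l m. \<forall>y\<in>carrier_mat n r. ab (dsum x y) = dsum (ab x) (ab y)))"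

definition diag_e :: "nat \<Rightarrow> 'a::zero \<Rightarrow> 'a mat" where
  "diag_e n e = mat n n (\<lambda>(i,j). if i = j then e else 0)"

definition ou_norm :: "(complex \<Rightarrow> 'a \<Rightarrow> 'a::ab_group_add) \<Rightarrow> (nat \<Rightarrow> 'a mat set) \<Rightarrow> 'a \<Rightarrow> nat \<Rightarrow> 'a mat \<Rightarrow> real" where
  "ou_norm sc P e n v = Inf {k. 0 < k \<and> rsm sc k (diag_e n e) + v \<in> P n \<and> rsm sc k (diag_e n e) - v \<in> P n}"

definition matrix_order_unit_space ::
  "(complex \<Rightarrow> 'a \<Rightarrow> 'a::ab_group_add) \<Rightarrow> ('a \<Rightarrow> 'a) \<Rightarrow> (nat \<Rightarrow> 'a mat set) \<Rightarrow> 'a \<Rightarrow> bool" where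
  "matrix_order_unit_space sc st P e \<longleftrightarrow>
     matrix_ordered_space sc st P
     \<and> (\<forall>n>0. diag_e n e \<in> P n
        \<and> (\<forall>v\<in>sa_mats st n. \<exists>k>0. rsm sc k (diag_e n e) + v \<in> P n \<and> rsm sc k (diag_e n e) - v \<in> P n)
        \<and> (\<forall>v\<in>sa_mats st n. (\<forall>k>0. rsm sc k (diag_e n e) + v \<in> P n) \<longrightarrow> v \<in> P n))"

text \<open>absolute matrix order unit space: each (M_n(X)_sa, e^n) is an absolute order unit
  space, i.e. orthogonality |u - v| = u + v coincides with \<infinity>-orthogonality on M_n(X)^+\<close>
definition abs_matrix_order_unit_space ::
  "(complex \<Rightarrow> 'a \<Rightarrow> 'a::ab_group_add) \<Rightarrow> ('a \<Rightarrow> 'a) \<Rightarrow> (nat \<Rightarrow> 'a mat set) \<Rightarrow> ('a mat \<Rightarrow> 'a mat) \<Rightarrow> 'a \<Rightarrow> bool" where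
  "abs_matrix_order_unit_space sc st P ab e \<longleftrightarrow>
     abs_matrix_ordered_space sc st P ab
     \<and> matrix_order_unit_space sc st P e
     \<and> (\<forall>n>0. \<forall>u\<in>P n. \<forall>v\<in>P n.
          ab (u - v) = u + v \<longleftrightarrow>
          (\<forall>k::real. ou_norm sc P e n (u + rsm sc k v)
                       = max (ou_norm sc P e n u) (ou_norm sc P e n (rsm sc k v))))"

definition completely_abs_preserving ::
  "(complex \<Rightarrow> 'a \<Rightarrow> 'a::ab_group_add) \<Rightarrow> (complex \<Rightarrow> 'b \<Rightarrow> 'b::ab_group_add)
   \<Rightarrow> ('a mat \<Rightarrow> 'a mat) \<Rightarrow> ('b mat \<Rightarrow> 'b mat) \<Rightarrow> ('a \<Rightarrow> 'b) \<Rightarrow> bool" where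
  "completely_abs_preserving scX scY abX abY \<phi> \<longleftrightarrow>
     Vector_Spaces.linear scX scY \<phi>
     \<and> (\<forall>l>0. \<forall>x\<in>carrier_mat l l. map_mat \<phi> (abX x) = abY (map_mat \<phi> x))"

definition Ker :: "('a \<Rightarrow> 'b::zero) \<Rightarrow> 'a set" where
  "Ker \<phi> = {x. \<phi> x = 0}"

definition mat_Ker :: "('a \<Rightarrow> 'b::zero) \<Rightarrow> nat \<Rightarrow> nat \<Rightarrow> 'a mat set" where
  "mat_Ker \<phi> l m = {x \<in> carrier_mat l m. map_mat \<phi> x = 0\<^sub>m l m}"

text \<open>X^+ = M_1(X)^+, identifying X with M_1(X)\<close>
definition pos_part :: "(nat \<Rightarrow> 'a mat set) \<Rightarrow> 'a set" where
  "pos_part P = {x. mat 1 1 (\<lambda>_. x) \<in> P 1}"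

definition abs_matrix_order_ideal ::
  "(complex \<Rightarrow> 'a \<Rightarrow> 'a::ab_group_add) \<Rightarrow> ('a \<Rightarrow> 'a) \<Rightarrow> (nat \<Rightarrow> 'a mat set) \<Rightarrow> ('a mat \<Rightarrow> 'a mat) \<Rightarrow> 'a set \<Rightarrow> bool" where
  "abs_matrix_order_ideal sc st P ab Z \<longleftrightarrow>
     0 \<in> Z \<and> (\<forall>x\<in>Z. \<forall>y\<in>Z. x + y \<in> Z) \<and> (\<forall>c. \<forall>x\<in>Z. sc c x \<in> Z)
     \<and> (\<forall>l>0. \<forall>x\<in>mats_of Z l l \<inter> sa_mats st l. \<forall>y\<in>sa_mats st l.
           y \<in> P l \<and> x - y \<in> P l \<longrightarrow> y \<in> mats_of Z l l)
     \<and> (\<forall>l m. 0 < l \<longrightarrow> 0 < m \<longrightarrow> (\<forall>x\<in>mats_of Z l m. ab x \<in> P m \<inter> mats_of Z m m))"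

end

theory Submission
  imports Defs
begin

(* Since phi preserves absolute values and |v| = v on positive matrices, phi is completely
   positive. With the properness of the cones of Y this gives the order-ideal property of the
   kernel (0 <= y <= x and phi x = 0 force phi y = 0) and, from phi |x| = |phi x| = |0| = 0,
   closure under absolute values. Every self-adjoint a equals (|a| + a) - |a| and every x equals
   h + i k with h, k self-adjoint, so X^+ spans X; hence phi commutes with the involution, and
   phi = 0 as soon as phi vanishes on X^+, e.g. when it kills an order unit, which dominates
   every positive element. *)

definition mat11 :: "'a \<Rightarrow> 'a mat" where
  "mat11 a = mat 1 1 (\<lambda>_. a)"

lemma mat11_index [simp]: "mat11 a $$ (0, 0) = a"
  and mat11_carrier [simp]: "mat11 a \<in> carrier_mat 1 1"
  unfolding mat11_def by auto

lemma mat11_eq_iff [simp]: "mat11 a = mat11 b \<longleftrightarrow> a = b"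
  by (metis mat11_index)

lemma mat11_eq_0m_iff [simp]: "mat11 a = 0\<^sub>m 1 1 \<longleftrightarrow> a = 0"
  unfolding mat11_def by (auto simp: mat_eq_iff)

lemma mat11_of_carrier: "x \<in> carrier_mat 1 1 \<Longrightarrow> x = mat11 (x $$ (0, 0))"
  unfolding mat11_def by (rule eq_matI) auto

lemma mat11_add: "mat11 a + mat11 b = mat11 (a + b)"
  and mat11_diff: "mat11 a - mat11 b = mat11 (a - b)"
  and mat11_uminus: "- mat11 a = mat11 (- a)"
  and map_mat_mat11: "map_mat f (mat11 a) = mat11 (f a)"
  and mstar_mat11: "mstar st (mat11 a) = mat11 (st a)"
  and rsm_mat11: "rsm sc k (mat11 a) = mat11 (sc (complex_of_real k) a)"
  and diag_e_1: "diag_e 1 e = mat11 e"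
  unfolding mat11_def mstar_def rsm_def diag_e_def by (rule eq_matI; auto)+

lemma mem_pos_part_iff: "a \<in> pos_part P \<longleftrightarrow> mat11 a \<in> P 1"
  unfolding pos_part_def mat11_def by simp

lemma carrier_dsum:
  "x \<in> carrier_mat l m \<Longrightarrow> y \<in> carrier_mat n r \<Longrightarrow> dsum x y \<in> carrier_mat (l + n) (m + r)"
  unfolding dsum_def by auto

lemma dsum_index_upper_left:
  "i < dim_row x \<Longrightarrow> j < dim_col x \<Longrightarrow> dsum x y $$ (i, j) = x $$ (i, j)"
  unfolding dsum_def by simp

lemma mem_mat_Ker_iff:
  "x \<in> mat_Ker \<phi> l m \<longleftrightarrow> x \<in> carrier_mat l m \<and> (\<forall>i<l. \<forall>j<m. \<phi> (x $$ (i, j)) = 0)"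
  unfolding mat_Ker_def by (auto simp: mat_eq_iff)

lemma mats_of_Ker: "mats_of (Ker \<phi>) l m = mat_Ker \<phi> l m"
  by (rule Set.set_eqI) (simp add: mats_of_def Ker_def mem_mat_Ker_iff)

lemma abs_ordered_spaceD:
  assumes "abs_ordered_space sc V C f"
  shows "v \<in> C \<Longrightarrow> f v = v"
    and "v \<in> V \<Longrightarrow> f v \<in> C"
    and "v \<in> V \<Longrightarrow> f v + v \<in> C"
    and "v \<in> V \<Longrightarrow> f (rsm sc k v) = rsm sc \<bar>k\<bar> (f v)"
  using assms unfolding abs_ordered_space_def by simp_all

lemma ordered_spaceD:
  assumes "ordered_space sc V C"
  shows "C \<subseteq> V"
    and "v \<in> C \<Longrightarrow> - v \<in> C \<Longrightarrow> v = 0\<^sub>m (dim_row v) (dim_col v)"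
  using assms unfolding ordered_space_def by simp_all

locale abs_matrix_ordered =
  fixes sc :: "complex \<Rightarrow> 'a::ab_group_add \<Rightarrow> 'a" and st :: "'a \<Rightarrow> 'a"
    and P :: "nat \<Rightarrow> 'a mat set" and ab :: "'a mat \<Rightarrow> 'a mat"
  assumes abs_matrix_ordered_space: "abs_matrix_ordered_space sc st P ab"
begin

lemma matrix_ordered_space: "matrix_ordered_space sc st P"
  using abs_matrix_ordered_space unfolding abs_matrix_ordered_space_def by simp

sublocale vector_space sc
  using matrix_ordered_space unfolding matrix_ordered_space_def by simp

sublocale star: additive st
  using matrix_ordered_space unfolding matrix_ordered_space_def by unfold_locales simp

lemma star_scale: "st (sc c x) = sc (cnj c) (st x)"
  and star_star: "st (st x) = x"
  and ordered_space_sa_mats: "0 < n \<Longrightarrow> ordered_space sc (sa_mats st n) (P n)"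
  using matrix_ordered_space unfolding matrix_ordered_space_def by simp_all

lemma abs_ordered_space_sa_mats: "0 < n \<Longrightarrow> abs_ordered_space sc (sa_mats st n) (P n) ab"
  and abs_mem_pos: "0 < l \<Longrightarrow> 0 < m \<Longrightarrow> x \<in> carrier_mat l m \<Longrightarrow> ab x \<in> P m"
  and abs_dsum: "0 < l \<Longrightarrow> 0 < m \<Longrightarrow> 0 < n \<Longrightarrow> 0 < r \<Longrightarrow>
      x \<in> carrier_mat l m \<Longrightarrow> y \<in> carrier_mat n r \<Longrightarrow> ab (dsum x y) = dsum (ab x) (ab y)"
  using abs_matrix_ordered_space unfolding abs_matrix_ordered_space_def by simp_all

lemma re_im_decomposition:
  obtains h k where "st h = h" "st k = k" "x = h + sc \<i> k"
proof
  show "st (sc (1/2) (x + st x)) = sc (1/2) (x + st x)"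
    by (simp add: star_scale star.add star_star add.commute)
  show "st (sc (\<i>/2) (st x - x)) = sc (\<i>/2) (st x - x)"
    by (simp add: star_scale star.diff star_star flip: scale_minus_right)
  have "sc \<i> (sc (\<i>/2) (st x - x)) = sc (- (1/2)) (st x - x)"
    by simp
  also have "\<dots> = sc (1/2) (x - st x)"
    by (metis minus_diff_eq scale_minus_left scale_minus_right)
  finally have "sc (1/2) (x + st x) + sc \<i> (sc (\<i>/2) (st x - x)) = sc (1/2) (x + x)"
    by (simp add: scale_right_distrib[symmetric])
  also have "\<dots> = sc (1/2 + 1/2) x"
    by (simp only: scale_left_distrib scale_right_distrib)
  finally show "x = sc (1/2) (x + st x) + sc \<i> (sc (\<i>/2) (st x - x))"
    by simp
qed

lemma pos_sa_mats: "0 < n \<Longrightarrow> v \<in> P n \<Longrightarrow> v \<in> sa_mats st n"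
  using ordered_spaceD(1)[OF ordered_space_sa_mats] by blast

lemma pos_carrier: "0 < n \<Longrightarrow> v \<in> P n \<Longrightarrow> v \<in> carrier_mat n n"
  using pos_sa_mats unfolding sa_mats_def by simp

lemma abs_of_pos: "0 < n \<Longrightarrow> v \<in> P n \<Longrightarrow> ab v = v"
  by (rule abs_ordered_spaceD(1)[OF abs_ordered_space_sa_mats])

lemma pos_antisym:
  assumes "0 < n" "v \<in> P n" "- v \<in> P n"
  shows "v = 0\<^sub>m n n"
  using ordered_spaceD(2)[OF ordered_space_sa_mats[OF assms(1)] assms(2,3)] pos_carrier[OF assms(1,2)]
  by simp

lemma abs_zero_mat: "0 < n \<Longrightarrow> ab (0\<^sub>m n n) = 0\<^sub>m n n"
proof -
  assume n: "0 < n"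
  have rsm_0: "rsm sc 0 v = 0\<^sub>m (dim_row v) (dim_col v)" for v
    unfolding rsm_def by (rule eq_matI) auto
  have "0\<^sub>m n n \<in> sa_mats st n"
    unfolding sa_mats_def mstar_def by (auto simp: star.zero)
  then have "ab (rsm sc 0 (0\<^sub>m n n)) = rsm sc \<bar>0\<bar> (ab (0\<^sub>m n n))"
    by (rule abs_ordered_spaceD(4)[OF abs_ordered_space_sa_mats[OF n]])
  moreover have "ab (0\<^sub>m n n) \<in> carrier_mat n n"
    using pos_carrier[OF n abs_mem_pos[OF n n zero_carrier_mat]] .
  ultimately show ?thesis
    by (simp add: rsm_0)
qed

lemma pos_part_star: "a \<in> pos_part P \<Longrightarrow> st a = a"
  using pos_sa_mats[of 1 "mat11 a"] unfolding mem_pos_part_iff sa_mats_def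
  by (simp add: mstar_mat11)

lemma pos_part_antisym: "a \<in> pos_part P \<Longrightarrow> - a \<in> pos_part P \<Longrightarrow> a = 0"
  using pos_antisym[of 1 "mat11 a"] unfolding mem_pos_part_iff mat11_uminus mat11_eq_0m_iff by simp

lemma selfadjoint_diff_pos_part:
  assumes "st a = a"
  obtains p q where "p \<in> pos_part P" "q \<in> pos_part P" "a = p - q"
proof -
  have "mat11 a \<in> sa_mats st 1"
    using assms mat11_carrier unfolding sa_mats_def by (simp add: mstar_mat11)
  then have abs_a: "ab (mat11 a) \<in> P 1" "ab (mat11 a) + mat11 a \<in> P 1"
    using abs_ordered_spaceD(2,3)[OF abs_ordered_space_sa_mats[of 1]] by simp_all
  define q where "q = ab (mat11 a) $$ (0, 0)"
  have "ab (mat11 a) = mat11 q"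
    unfolding q_def using pos_carrier[OF _ abs_a(1)] by (simp add: mat11_of_carrier)
  with abs_a show thesis
    by (intro that[of "q + a" q]) (simp_all add: mem_pos_part_iff mat11_add)
qed

lemma pos_part_le_order_unit:
  assumes "matrix_order_unit_space sc st P e" and "a \<in> pos_part P"
  obtains k where "sc (complex_of_real k) e - a \<in> pos_part P"
proof -
  have "mat11 a \<in> sa_mats st 1"
    using assms(2) pos_sa_mats[of 1] unfolding mem_pos_part_iff by simp
  moreover have "\<forall>v\<in>sa_mats st 1. \<exists>k>0.
      rsm sc k (diag_e 1 e) + v \<in> P 1 \<and> rsm sc k (diag_e 1 e) - v \<in> P 1"
    using assms(1) unfolding matrix_order_unit_space_def by simp
  ultimately obtain k where "rsm sc k (diag_e 1 e) - mat11 a \<in> P 1"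
    by blast
  then show thesis
    by (intro that[of k]) (simp only: mem_pos_part_iff diag_e_1 rsm_mat11 mat11_diff)
qed

lemma span_pos_part: "span (pos_part P) = UNIV"
proof -
  have selfadjoint_in_span: "a \<in> span (pos_part P)" if "st a = a" for a
    using that by (metis selfadjoint_diff_pos_part span_base span_diff)
  have "x \<in> span (pos_part P)" for x
  proof -
    obtain h k where "st h = h" "st k = k" "x = h + sc \<i> k"
      by (rule re_im_decomposition)
    then show ?thesis
      using selfadjoint_in_span by (simp add: span_add span_scale)
  qed
  then show ?thesis
    by blast
qed

end

locale completely_abs_preserving_map =
  X: abs_matrix_ordered scX stX PX abX + Y: abs_matrix_ordered scY stY PY abY
  for scX :: "complex \<Rightarrow> 'a::ab_group_add \<Rightarrow> 'a" and stX PX abX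
    and scY :: "complex \<Rightarrow> 'b::ab_group_add \<Rightarrow> 'b" and stY PY abY +
  fixes \<phi> :: "'a \<Rightarrow> 'b"
  assumes completely_abs_preserving: "completely_abs_preserving scX scY abX abY \<phi>"
begin

sublocale Vector_Spaces.linear scX scY \<phi>
  using completely_abs_preserving unfolding completely_abs_preserving_def by simp

lemma map_abs: "0 < l \<Longrightarrow> x \<in> carrier_mat l l \<Longrightarrow> map_mat \<phi> (abX x) = abY (map_mat \<phi> x)"
  using completely_abs_preserving unfolding completely_abs_preserving_def by simp

lemma map_pos:
  assumes "0 < n" "x \<in> PX n"
  shows "map_mat \<phi> x \<in> PY n"
proof -
  have "map_mat \<phi> x = abY (map_mat \<phi> x)"
    using map_abs[OF assms(1) X.pos_carrier[OF assms]] X.abs_of_pos[OF assms] by simp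
  also have "\<dots> \<in> PY n"
    using Y.abs_mem_pos[OF assms(1) assms(1)] X.pos_carrier[OF assms] by simp
  finally show ?thesis .
qed

lemma map_pos_part: "a \<in> pos_part PX \<Longrightarrow> \<phi> a \<in> pos_part PY"
  using map_pos[of 1 "mat11 a"] unfolding mem_pos_part_iff map_mat_mat11 by simp

lemma map_star: "\<phi> (stX x) = stY (\<phi> x)"
proof -
  have map_selfadjoint: "stY (\<phi> a) = \<phi> a" if sa: "stX a = a" for a
  proof -
    obtain p q where "p \<in> pos_part PX" "q \<in> pos_part PX" "a = p - q"
      using X.selfadjoint_diff_pos_part[OF sa] .
    then show ?thesis
      using Y.pos_part_star[OF map_pos_part] by (simp add: diff Y.star.diff)
  qed
  obtain h k where "stX h = h" "stX k = k" "x = h + scX \<i> k"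
    by (rule X.re_im_decomposition)
  then show ?thesis
    by (simp add: X.star.add X.star_scale Y.star.add Y.star_scale add diff scale map_selfadjoint)
qed

lemma mstar_mem_mat_Ker: "x \<in> mat_Ker \<phi> l l \<Longrightarrow> mstar stX x \<in> mat_Ker \<phi> l l"
  unfolding mem_mat_Ker_iff mstar_def by (auto simp: map_star Y.star.zero)

lemma pos_le_mem_mat_Ker:
  assumes l: "0 < l" and x: "x \<in> mat_Ker \<phi> l l" and y: "y \<in> PX l" "x - y \<in> PX l"
  shows "y \<in> mat_Ker \<phi> l l"
proof -
  have carrier: "x \<in> carrier_mat l l" "y \<in> carrier_mat l l"
    using x X.pos_carrier[OF l y(1)] unfolding mem_mat_Ker_iff by simp_all
  have "map_mat \<phi> (x - y) = - map_mat \<phi> y"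
    using x carrier unfolding mem_mat_Ker_iff by (auto simp: diff)
  then have "map_mat \<phi> y = 0\<^sub>m l l"
    using Y.pos_antisym[OF l] map_pos[OF l] y by metis
  with carrier show ?thesis
    unfolding mat_Ker_def by simp
qed

text \<open>The hypothesis on \<open>\<phi>\<close> only concerns square matrices, so \<open>x\<close> is padded with a zero block.\<close>
lemma abs_mem_mat_Ker:
  assumes l: "0 < l" and m: "0 < m" and x: "x \<in> mat_Ker \<phi> l m"
  shows "abX x \<in> mat_Ker \<phi> m m"
proof -
  have x_carrier: "x \<in> carrier_mat l m"
    using x unfolding mem_mat_Ker_iff by simp
  define D where "D = dsum x (0\<^sub>m m l)"
  have D_carrier: "D \<in> carrier_mat (l + m) (l + m)"
    using carrier_dsum[OF x_carrier zero_carrier_mat[of m l]] unfolding D_def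
    by (simp add: add.commute)
  have "D \<in> mat_Ker \<phi> (l + m) (l + m)"
    using x unfolding D_def dsum_def mem_mat_Ker_iff by auto
  then have "map_mat \<phi> (abX D) = 0\<^sub>m (l + m) (l + m)"
    using map_abs[OF _ D_carrier] Y.abs_zero_mat l unfolding mat_Ker_def by simp
  moreover have "abX D \<in> carrier_mat (l + m) (l + m)"
    using X.pos_carrier[OF _ X.abs_mem_pos[OF _ _ D_carrier]] l by simp
  ultimately have abs_D_Ker: "\<phi> (abX D $$ (i, j)) = 0" if "i < l + m" "j < l + m" for i j
    using that by (metis index_map_mat(1) index_zero_mat(1) carrier_matD)
  have abs_x_carrier: "abX x \<in> carrier_mat m m"
    using X.pos_carrier[OF m X.abs_mem_pos[OF l m x_carrier]] .
  have "abX D = dsum (abX x) (abX (0\<^sub>m m l))"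
    unfolding D_def using X.abs_dsum[OF l m m l x_carrier zero_carrier_mat] .
  then have "abX x $$ (i, j) = abX D $$ (i, j)" if "i < m" "j < m" for i j
    using that abs_x_carrier by (simp add: dsum_index_upper_left)
  with abs_D_Ker abs_x_carrier show ?thesis
    unfolding mem_mat_Ker_iff by simp
qed

lemma Ker_abs_matrix_order_ideal: "abs_matrix_order_ideal scX stX PX abX (Ker \<phi>)"
  unfolding abs_matrix_order_ideal_def mats_of_Ker
proof (intro conjI ballI allI impI)
  show "0 \<in> Ker \<phi>"
    by (simp add: Ker_def)
  show "x + y \<in> Ker \<phi>" if "x \<in> Ker \<phi>" "y \<in> Ker \<phi>" for x y
    using that by (simp add: Ker_def add)
  show "scX c x \<in> Ker \<phi>" if "x \<in> Ker \<phi>" for x c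
    using that by (simp add: Ker_def scale)
  show "y \<in> mat_Ker \<phi> l l"
    if "0 < l" "x \<in> mat_Ker \<phi> l l \<inter> sa_mats stX l" "y \<in> PX l \<and> x - y \<in> PX l" for l x y
    using that pos_le_mem_mat_Ker[of l x y] by simp
  show "abX x \<in> PX m \<inter> mat_Ker \<phi> m m" if "0 < l" "0 < m" "x \<in> mat_Ker \<phi> l m" for l m x
    using that X.abs_mem_pos[of l m x] abs_mem_mat_Ker[of l m x] by (simp add: mem_mat_Ker_iff)
qed

lemma Ker_eq_UNIV_iff_pos_part: "Ker \<phi> = UNIV \<longleftrightarrow> pos_part PX \<subseteq> Ker \<phi>"
proof
  assume "pos_part PX \<subseteq> Ker \<phi>"
  then have "\<phi> x = 0" for x
    using eq_0_on_span[of "pos_part PX"] X.span_pos_part unfolding Ker_def by blast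
  then show "Ker \<phi> = UNIV"
    unfolding Ker_def by blast
qed simp

lemma eq_0_iff_order_unit:
  assumes "matrix_order_unit_space scX stX PX e"
  shows "\<phi> = (\<lambda>_. 0) \<longleftrightarrow> \<phi> e = 0"
proof
  assume e: "\<phi> e = 0"
  have "\<phi> a = 0" if a: "a \<in> pos_part PX" for a
  proof -
    obtain k where "scX (complex_of_real k) e - a \<in> pos_part PX"
      using X.pos_part_le_order_unit[OF assms a] .
    then have "- \<phi> a \<in> pos_part PY"
      using map_pos_part by (fastforce simp: diff scale e)
    then show "\<phi> a = 0"
      using Y.pos_part_antisym map_pos_part[OF a] by blast
  qed
  then have "pos_part PX \<subseteq> Ker \<phi>"
    unfolding Ker_def by blast
  then have "Ker \<phi> = UNIV"
    using Ker_eq_UNIV_iff_pos_part by blast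
  then show "\<phi> = (\<lambda>_. 0)"
    unfolding Ker_def by auto
qed simp

end

theorem theorem3p8:
  fixes scX :: "complex \<Rightarrow> 'a::ab_group_add \<Rightarrow> 'a" and stX :: "'a \<Rightarrow> 'a"
    and PX :: "nat \<Rightarrow> 'a mat set" and abX :: "'a mat \<Rightarrow> 'a mat"
    and scY :: "complex \<Rightarrow> 'b::ab_group_add \<Rightarrow> 'b" and stY :: "'b \<Rightarrow> 'b"
    and PY :: "nat \<Rightarrow> 'b mat set" and abY :: "'b mat \<Rightarrow> 'b mat"
    and \<phi> :: "'a \<Rightarrow> 'b"
  assumes X: "abs_matrix_ordered_space scX stX PX abX"
    and Y: "abs_matrix_ordered_space scY stY PY abY"
    and phi: "completely_abs_preserving scX scY abX abY \<phi>"
  shows "(\<forall>l m. 0 < l \<longrightarrow> 0 < m \<longrightarrow> mats_of (Ker \<phi>) l m = mat_Ker \<phi> l m)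
    \<and> (\<forall>l>0. \<forall>x\<in>mat_Ker \<phi> l l. mstar stX x \<in> mat_Ker \<phi> l l)
    \<and> abs_matrix_order_ideal scX stX PX abX (Ker \<phi>)
    \<and> (\<phi> = (\<lambda>_. 0) \<longleftrightarrow> Ker \<phi> = UNIV)
    \<and> (Ker \<phi> = UNIV \<longleftrightarrow> Ker \<phi> \<inter> pos_part PX = pos_part PX)
    \<and> (\<forall>e. abs_matrix_order_unit_space scX stX PX abX e \<longrightarrow> (\<phi> = (\<lambda>_. 0) \<longleftrightarrow> \<phi> e = 0))"
proof -
  interpret completely_abs_preserving_map scX stX PX abX scY stY PY abY \<phi>
    using X Y phi
    by (simp add: completely_abs_preserving_map_def completely_abs_preserving_map_axioms_def
        abs_matrix_ordered_def)
  have "\<phi> = (\<lambda>_. 0) \<longleftrightarrow> Ker \<phi> = UNIV"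
    by (auto simp: Ker_def fun_eq_iff)
  moreover have "Ker \<phi> = UNIV \<longleftrightarrow> Ker \<phi> \<inter> pos_part PX = pos_part PX"
    using Ker_eq_UNIV_iff_pos_part by blast
  moreover have "\<phi> = (\<lambda>_. 0) \<longleftrightarrow> \<phi> e = 0" if "abs_matrix_order_unit_space scX stX PX abX e" for e
    using that eq_0_iff_order_unit unfolding abs_matrix_order_unit_space_def by blast
  ultimately show ?thesis
    using mats_of_Ker mstar_mem_mat_Ker Ker_abs_matrix_order_ideal by blast
qed

end
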